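(* Let $q$ be a prime power, let $\mathbf{C}\subseteq\mathbf{F}_q^n$ be a projective linear $[n,k]_q$ code with maximum weight $w\le n$, and let $h$ be a positive integer. Then the simplex complementary code of $\mathbf{C}$ of dimension $k+h$ has parameters $[\frac{q^{k+h}-1}{q-1}-n,\ k+h,\ q^{k+h-1}-w]_q$ and maximum weight $q^{k+h-1}$. When $h>\log_q w-k+2$, this simplex complementary code is a minimal code satisfying the Ashikhmin–Barg condition.
   Context: A linear $[n,k]_q$ code is projective if the columns $\mathbf{g}_1,\dots,\mathbf{g}_n$ of a generator matrix are nonzero and pairwise linearly independent. Simplex complementary code: set $K=k+h$ and regard $\mathbf{g}_1,\dots,\mathbf{g}_n$ as vectors of $\mathbf{F}_q^K$ by appending $h$ zero coordinates. Choose a set $P$ of representatives of all $\frac{q^K-1}{q-1}$ one-dimensional subspaces of $\mathbf{F}_q^K$ containing $\mathbf{g}_1,\dots,\mathbf{g}_n$. The simplex complementary code of $\mathbf{C}$ is the linear code generated by the $K\times(\frac{q^K-1}{q-1}-n)$ matrix whose columns are the elements of $P\setminus\{\mathbf{g}_1,\dots,\mathbf{g}_n\}$. A linear code is minimal if for all nonzero codewords $\mathbf{c},\mathbf{c}'$ with $supp(\mathbf{c}')\subseteq supp(\mathbf{c})$ there is $\lambda\in\mathbf{F}_q^*$ with $\mathbf{c}'=\lambda\mathbf{c}$. With $w_{min},w_{max}$ the minimum and maximum weights of nonzero codewords, the Ashikhmin–Barg condition is $w_{min}/w_{max}>(q-1)/q$. The notation $[n,k,d]_q$ means length $n$, dimension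 $k$, minimum distance $d$. *)

theory Defs
  imports "HOL-Analysis.Analysis" "HOL-Library.Function_Algebras"
begin

text \<open>Vectors of F_q^K are functions nat => 'a vanishing at indices >= K.\<close>
definition vecs :: "nat \<Rightarrow> (nat \<Rightarrow> 'a::zero) set" where
  "vecs K = {v. \<forall>i\<ge>K. v i = 0}"

definition dotp :: "nat \<Rightarrow> (nat \<Rightarrow> 'a::comm_semiring_0) \<Rightarrow> (nat \<Rightarrow> 'a) \<Rightarrow> 'a" where
  "dotp K u v = (\<Sum>i<K. u i * v i)"

text \<open>The linear code generated by the K x |J| matrix whose columns are col j (j in J):
  codewords are indexed by J (zero outside J).\<close>
definition gen_code :: "nat \<Rightarrow> 'j set \<Rightarrow> ('j \<Rightarrow> (nat \<Rightarrow> 'a::field)) \<Rightarrow> ('j \<Rightarrow> 'a) set" where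
  "gen_code K J col = {(\<lambda>j. if j \<in> J then dotp K u (col j) else 0) | u. u \<in> vecs K}"

definition code_dim :: "('j \<Rightarrow> 'a::field) set \<Rightarrow> nat" where
  "code_dim C = vector_space.dim (\<lambda>(c::'a) (f::'j \<Rightarrow> 'a). (\<lambda>j. c * f j)) C"

definition supp :: "('j \<Rightarrow> 'a::zero) \<Rightarrow> 'j set" where
  "supp c = {j. c j \<noteq> 0}"

definition wt :: "('j \<Rightarrow> 'a::zero) \<Rightarrow> nat" where
  "wt c = card (supp c)"

definition min_weight :: "('j \<Rightarrow> 'a::zero) set \<Rightarrow> nat" where
  "min_weight C = Min {wt c | c. c \<in> C \<and> c \<noteq> 0}"

definition max_weight :: "('j \<Rightarrow> 'a::zero) set \<Rightarrow> nat" where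
  "max_weight C = Max {wt c | c. c \<in> C \<and> c \<noteq> 0}"

definition projective :: "nat \<Rightarrow> (nat \<Rightarrow> (nat \<Rightarrow> 'a::field)) \<Rightarrow> bool" where
  "projective n g \<longleftrightarrow> (\<forall>i<n. g i \<noteq> 0) \<and>
     (\<forall>i<n. \<forall>j<n. i \<noteq> j \<longrightarrow> \<not> (\<exists>c. g i = (\<lambda>l. c * g j l)))"

definition proj_reps :: "nat \<Rightarrow> (nat \<Rightarrow> 'a::field) set \<Rightarrow> bool" where
  "proj_reps K P \<longleftrightarrow> P \<subseteq> vecs K \<and> 0 \<notin> P \<and>
     (\<forall>v\<in>vecs K. v \<noteq> 0 \<longrightarrow> (\<exists>!p. p \<in> P \<and> (\<exists>c. v = (\<lambda>l. c * p l))))"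

definition minimal_code :: "('j \<Rightarrow> 'a::field) set \<Rightarrow> bool" where
  "minimal_code C \<longleftrightarrow> (\<forall>c\<in>C. \<forall>c'\<in>C. c \<noteq> 0 \<longrightarrow> c' \<noteq> 0 \<longrightarrow> supp c' \<subseteq> supp c \<longrightarrow>
     (\<exists>a. a \<noteq> 0 \<and> c' = (\<lambda>j. a * c j)))"

end

theory Submission
  imports Defs "HOL-Probability.Product_PMF"
begin

text \<open>Let K = k + h. The columns of the simplex code of dimension K are all of P, and for every
  nonzero message u exactly q^(K-1) of them satisfy u \<cdot> p \<noteq> 0. The columns of C lie in P \<inter> F_q^k,
  so deleting them removes exactly wt(uC) of these, and the complementary codeword of u has weight
  q^(K-1) - wt(uC). As 0 \<le> wt(uC) \<le> w \<le> q^(k-1) < q^(K-1), the complementary code is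
  nondegenerate, its weights are exactly q^(K-1) - w (at a maximum-weight word of C) and q^(K-1) (at
  u = e_k, orthogonal to all of F_q^k), and the Ashikhmin--Barg condition reduces to w < q^(K-2),
  which is the logarithmic hypothesis on h.\<close>

lemma vector_space_pointwise_scale: "vector_space (\<lambda>(c::'a::field) (f::'j \<Rightarrow> 'a). \<lambda>j. c * f j)"
  unfolding vector_space_def by (auto simp: algebra_simps)

lemma two_le_card_field: "2 \<le> CARD('a::{finite,field})"
proof -
  have "card {0, 1::'a} \<le> CARD('a)" by (rule card_mono) auto
  then show ?thesis by simp
qed

definition unit_vec :: "nat \<Rightarrow> nat \<Rightarrow> 'a::zero_neq_one" where
  "unit_vec i = (\<lambda>l. if l = i then 1 else 0)"

lemma zero_in_vecs: "0 \<in> vecs m"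
  by (simp add: vecs_def)

lemma unit_vec_in_vecs: "i < m \<Longrightarrow> unit_vec i \<in> vecs m"
  by (auto simp: unit_vec_def vecs_def)

lemma unit_vec_neq_zero: "unit_vec i \<noteq> (0 :: nat \<Rightarrow> 'a::zero_neq_one)"
proof
  assume "unit_vec i = (0 :: nat \<Rightarrow> 'a)"
  from fun_cong[OF this, of i] show False
    by (simp add: unit_vec_def)
qed

lemma vecs_mono: "m \<le> K \<Longrightarrow> vecs m \<subseteq> vecs K"
  by (auto simp: vecs_def)

lemma vecs_eq_PiE_dflt: "vecs m = PiE_dflt {..<m} 0 (\<lambda>_. UNIV)"
  by (auto simp: vecs_def PiE_dflt_def)

lemma finite_vecs: "finite (vecs m :: (nat \<Rightarrow> 'a::{finite,zero}) set)"
  unfolding vecs_eq_PiE_dflt by auto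

lemma card_vecs: "card (vecs m :: (nat \<Rightarrow> 'a::{finite,zero}) set) = CARD('a) ^ m"
  unfolding vecs_eq_PiE_dflt by (simp add: card_PiE_dflt)

lemma dotp_add_right: "dotp m u (\<lambda>l. v l + w l) = dotp m u v + dotp m u w"
  unfolding dotp_def by (simp add: distrib_left sum.distrib)

lemma dotp_scale_right: "dotp m u (\<lambda>l. c * v l) = c * dotp m u v"
  unfolding dotp_def by (simp add: sum_distrib_left ac_simps)

lemma dotp_diff_scaled_left:
  "dotp m (\<lambda>l. u l - a * u' l) v = dotp m u v - a * dotp m u' (v :: nat \<Rightarrow> 'a::comm_ring)"
  unfolding dotp_def by (simp add: algebra_simps sum_subtractf sum_distrib_left)

lemma dotp_unit_vec_left:
  "dotp m (unit_vec i) v = (if i < m then v i else (0 :: 'a::comm_semiring_1))"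
  unfolding dotp_def unit_vec_def by (simp add: if_distrib[of "\<lambda>x. x * _"] cong: if_cong)

lemma dotp_unit_vec_right:
  "dotp m u (unit_vec i) = (if i < m then u i else (0 :: 'a::comm_semiring_1))"
  unfolding dotp_def unit_vec_def by (simp add: if_distrib cong: if_cong)

lemma dotp_eq_0_if_vanishing: "\<forall>i<m. u i = 0 \<Longrightarrow> dotp m u v = 0"
  unfolding dotp_def by simp

lemma dotp_eq_if_in_vecs: "v \<in> vecs k \<Longrightarrow> k \<le> K \<Longrightarrow> dotp K u v = dotp k u v"
  unfolding dotp_def by (rule sum.mono_neutral_right) (auto simp: vecs_def)

lemma card_dotp_eq_0:
  fixes u :: "nat \<Rightarrow> 'a::{finite,field}"
  assumes i: "i < m" "u i \<noteq> 0"
  shows "card {v \<in> vecs m. dotp m u v = 0} = CARD('a) ^ (m - 1)"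
proof -
  define F where "F c = {v \<in> vecs m. dotp m u v = c}" for c
  define shift where "shift d v = (\<lambda>l. v l + d * unit_vec i l)" for d and v :: "nat \<Rightarrow> 'a"
  have dotp_shift: "dotp m u (shift d v) = dotp m u v + d * u i" for d v
    using i by (simp add: shift_def dotp_add_right dotp_scale_right dotp_unit_vec_right)
  have shift_vecs: "shift d v \<in> vecs m" if "v \<in> vecs m" for d v
    using that i by (auto simp: shift_def vecs_def unit_vec_def)
  \<comment> \<open>all level sets of dotp m u have the same size: translate along the i-th unit vector\<close>
  have shift_cancel: "shift d (shift (- d) v) = v" "shift (- d) (shift d v) = v" for d v
    by (simp_all add: shift_def fun_eq_iff algebra_simps)
  have shift_F: "shift (d / u i) v \<in> F (c + d)" if "v \<in> F c" for c d v
    using that i(2) unfolding F_def by (auto simp: dotp_shift shift_vecs)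
  have bij: "bij_betw (shift (c / u i)) (F 0) (F c)" for c
  proof (rule bij_betw_byWitness[where f' = "shift (- (c / u i))"])
    show "shift (c / u i) ` F 0 \<subseteq> F c"
      using shift_F[of _ 0 c] by auto
    show "shift (- (c / u i)) ` F c \<subseteq> F 0"
      using shift_F[of _ c "- c"] by auto
  qed (simp_all add: shift_cancel)
  define N where "N = card (F 0)"
  have card_F: "card (F c) = N" for c
    unfolding N_def by (rule bij_betw_same_card[OF bij, symmetric])
  have finite_F: "finite (F c)" for c
    unfolding F_def by (rule finite_subset[OF _ finite_vecs]) auto
  have "CARD('a) ^ m = card (vecs m :: (nat \<Rightarrow> 'a) set)"
    by (rule card_vecs[symmetric])
  also have "\<dots> = card (\<Union>c. F c)"
    by (rule arg_cong[where f = card]) (auto simp: F_def)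
  also have "\<dots> = (\<Sum>c\<in>UNIV. card (F c))"
    by (rule card_UN_disjoint) (simp_all add: finite_F, auto simp: F_def)
  also have "\<dots> = CARD('a) * N"
    by (simp add: card_F)
  finally have "CARD('a) * CARD('a) ^ (m - 1) = CARD('a) * N"
    using i by (simp add: power_eq_if[of _ m] split: if_splits)
  then show ?thesis
    by (simp add: N_def F_def)
qed

lemma card_dotp_neq_0:
  fixes u :: "nat \<Rightarrow> 'a::{finite,field}"
  assumes "i < m" "u i \<noteq> 0"
  shows "card {v \<in> vecs m. dotp m u v \<noteq> 0} = (CARD('a) - 1) * CARD('a) ^ (m - 1)"
proof -
  have "{v \<in> vecs m. dotp m u v \<noteq> 0} = vecs m - {v \<in> vecs m. dotp m u v = 0}"
    by auto
  moreover have "CARD('a) ^ m = CARD('a) * CARD('a) ^ (m - 1)"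
    using assms by (simp add: power_eq_if[of _ m])
  ultimately show ?thesis
    using card_dotp_eq_0[of i m u] assms
    by (simp add: card_Diff_subset finite_vecs card_vecs diff_mult_distrib)
qed

lemma card_scaling_closed:
  fixes P A :: "(nat \<Rightarrow> 'a::{finite,field}) set"
  assumes P: "proj_reps K P" and A: "A \<subseteq> vecs K" "0 \<notin> A"
    and scaling_closed: "\<And>v c. v \<in> A \<Longrightarrow> c \<noteq> 0 \<Longrightarrow> (\<lambda>l. c * v l) \<in> A"
  shows "card A = (CARD('a) - 1) * card (P \<inter> A)"
proof -
  have P_vecs: "P \<subseteq> vecs K" "0 \<notin> P"
    and unique_rep: "\<And>v. v \<in> vecs K \<Longrightarrow> v \<noteq> 0 \<Longrightarrow> \<exists>!p. p \<in> P \<and> (\<exists>c. v = (\<lambda>l. c * p l))"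
    using P unfolding proj_reps_def by auto
  let ?scale = "\<lambda>(c::'a, p::nat \<Rightarrow> 'a). \<lambda>l. c * p l"
  have "bij_betw ?scale ((UNIV - {0}) \<times> (P \<inter> A)) A"
  proof (rule bij_betw_imageI)
    show "inj_on ?scale ((UNIV - {0}) \<times> (P \<inter> A))"
    proof (rule inj_onI)
      fix x y assume x: "x \<in> (UNIV - {0}) \<times> (P \<inter> A)" and y: "y \<in> (UNIV - {0}) \<times> (P \<inter> A)"
        and "?scale x = ?scale y"
      obtain c p c' p' where xy: "x = (c, p)" "y = (c', p')"
        by (cases x, cases y)
      have cp: "c \<noteq> 0" "p \<in> P" "c' \<noteq> 0" "p' \<in> P"
        using x y xy by auto
      have eq: "(\<lambda>l. c * p l) = (\<lambda>l. c' * p' l)"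
        using \<open>?scale x = ?scale y\<close> xy by simp
      have "p \<noteq> 0"
        using cp P_vecs by auto
      then obtain l where l: "p l \<noteq> 0"
        by (auto simp: fun_eq_iff)
      then have "(\<lambda>l. c * p l) \<noteq> 0"
        using cp by (auto simp: fun_eq_iff)
      moreover have "(\<lambda>l. c * p l) \<in> vecs K"
        using cp P_vecs by (auto simp: vecs_def)
      ultimately have "p = p'"
        using unique_rep cp eq by blast
      moreover from this have "c * p l = c' * p l"
        using fun_cong[OF eq, of l] by simp
      ultimately show "x = y"
        using l xy by simp
    qed
    show "?scale ` ((UNIV - {0}) \<times> (P \<inter> A)) = A"
    proof (intro equalityI subsetI)
      fix v assume "v \<in> A"
      then have "v \<in> vecs K" "v \<noteq> 0"
        using A by auto
      then obtain p c where p: "p \<in> P" "v = (\<lambda>l. c * p l)"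
        using unique_rep[THEN ex1_implies_ex] by blast
      with \<open>v \<noteq> 0\<close> have "c \<noteq> 0"
        by auto
      moreover have "p = (\<lambda>l. inverse c * v l)"
        using p \<open>c \<noteq> 0\<close> by auto
      ultimately have "p \<in> A"
        using scaling_closed \<open>v \<in> A\<close> by simp
      then show "v \<in> ?scale ` ((UNIV - {0}) \<times> (P \<inter> A))"
        using p \<open>c \<noteq> 0\<close> by (intro image_eqI[of _ _ "(c, p)"]) auto
    next
      fix v assume "v \<in> ?scale ` ((UNIV - {0}) \<times> (P \<inter> A))"
      then obtain c p where "c \<noteq> 0" "p \<in> A" "v = (\<lambda>l. c * p l)"
        by auto
      then show "v \<in> A"
        using scaling_closed by simp
    qed
  qed
  then have "card ((UNIV - {0 :: 'a}) \<times> (P \<inter> A)) = card A"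
    by (rule bij_betw_same_card)
  then show ?thesis
    by (simp add: card_cartesian_product card_Diff_subset)
qed

lemma card_proj_reps:
  fixes P :: "(nat \<Rightarrow> 'a::{finite,field}) set"
  assumes "proj_reps K P"
  shows "card P = (CARD('a) ^ K - 1) div (CARD('a) - 1)"
proof -
  have "card (vecs K - {0} :: (nat \<Rightarrow> 'a) set) = (CARD('a) - 1) * card (P \<inter> (vecs K - {0}))"
    by (rule card_scaling_closed[OF assms]) (auto simp: vecs_def fun_eq_iff)
  moreover have "P \<inter> (vecs K - {0}) = P"
    using assms by (auto simp: proj_reps_def)
  ultimately have "CARD('a) ^ K - 1 = (CARD('a) - 1) * card P"
    by (simp add: card_vecs zero_in_vecs)
  then show ?thesis
    using two_le_card_field[where 'a = 'a] by simp
qed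

lemma card_proj_reps_dotp_neq_0:
  fixes P :: "(nat \<Rightarrow> 'a::{finite,field}) set"
  assumes P: "proj_reps K P" and "m \<le> K" and i: "i < m" "u i \<noteq> 0"
  shows "card (P \<inter> {v \<in> vecs m. dotp m u v \<noteq> 0}) = CARD('a) ^ (m - 1)"
proof -
  have "(CARD('a) - 1) * CARD('a) ^ (m - 1)
      = (CARD('a) - 1) * card (P \<inter> {v \<in> vecs m. dotp m u v \<noteq> 0})"
    unfolding card_dotp_neq_0[of i m u, OF i, symmetric]
    by (rule card_scaling_closed[OF P])
      (use vecs_mono[OF \<open>m \<le> K\<close>] in \<open>auto simp: dotp_scale_right vecs_def dotp_def[of _ _ 0]\<close>)
  then show ?thesis
    using two_le_card_field[where 'a = 'a] by simp
qed

definition codeword :: "nat \<Rightarrow> 'j set \<Rightarrow> ('j \<Rightarrow> nat \<Rightarrow> 'a::field) \<Rightarrow> (nat \<Rightarrow> 'a) \<Rightarrow> 'j \<Rightarrow> 'a" where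
  "codeword K J col u = (\<lambda>j. if j \<in> J then dotp K u (col j) else 0)"

lemma gen_code_eq_image: "gen_code K J col = codeword K J col ` vecs K"
  unfolding gen_code_def codeword_def by auto

lemma codeword_in_gen_code: "codeword K J col u \<in> gen_code K J col"
proof -
  let ?u = "\<lambda>l. if l < K then u l else 0"
  have "codeword K J col u = codeword K J col ?u"
    unfolding codeword_def dotp_def by (auto simp: fun_eq_iff intro!: sum.cong)
  moreover have "?u \<in> vecs K"
    by (simp add: vecs_def)
  ultimately show ?thesis
    unfolding gen_code_eq_image by blast
qed

lemma finite_gen_code: "finite (gen_code K J (col :: 'j \<Rightarrow> nat \<Rightarrow> 'a::{finite,field}))"
  unfolding gen_code_eq_image by (simp add: finite_vecs)

lemma codeword_zero [simp]: "codeword K J col 0 = 0"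
  by (simp add: codeword_def dotp_def fun_eq_iff)

lemma codeword_diff_scaled:
  "codeword K J col (\<lambda>l. u l - a * u' l) = (\<lambda>j. codeword K J col u j - a * codeword K J col u' j)"
  by (simp add: codeword_def dotp_diff_scaled_left fun_eq_iff)

lemma gen_code_diff_scaled:
  assumes "c \<in> gen_code K J col" "c' \<in> gen_code K J col"
  shows "(\<lambda>j. c j - a * c' j) \<in> gen_code K J col"
  using assms unfolding gen_code_eq_image
  by (auto simp flip: codeword_diff_scaled intro: codeword_in_gen_code[unfolded gen_code_eq_image])

lemma wt_codeword:
  assumes "inj_on col J"
  shows "wt (codeword K J col u) = card (col ` J \<inter> {v. dotp K u v \<noteq> 0})"
proof -
  have "col ` J \<inter> {v. dotp K u v \<noteq> 0} = col ` supp (codeword K J col u)"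
    by (auto simp: supp_def codeword_def)
  moreover have "inj_on col (supp (codeword K J col u))"
    using assms by (rule inj_on_subset) (auto simp: supp_def codeword_def split: if_splits)
  ultimately show ?thesis
    by (simp add: wt_def card_image)
qed

lemma sum_apply: "(\<Sum>a\<in>A. f a) x = (\<Sum>a\<in>A. f a x)"
  by (induction A rule: infinite_finite_induct) auto

lemma codeword_unit_vec_expansion:
  "codeword K J col u = (\<Sum>i<K. (\<lambda>j. u i * codeword K J col (unit_vec i) j))"
  by (simp add: codeword_def fun_eq_iff sum_apply dotp_unit_vec_left) (simp add: dotp_def)

lemma code_dim_trivial:
  fixes C :: "('j \<Rightarrow> 'a::field) set"
  assumes "C \<subseteq> {0}"
  shows "code_dim C = 0"
proof -
  interpret V: vector_space "\<lambda>(c::'a) (f::'j \<Rightarrow> 'a). \<lambda>j. c * f j"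
    by (rule vector_space_pointwise_scale)
  have "V.dim C = 0"
    by (rule V.dim_unique[of "{}"]) (use assms in \<open>auto simp: V.span_empty V.independent_empty\<close>)
  then show ?thesis
    by (simp add: code_dim_def)
qed

lemma code_dim_gen_code:
  fixes col :: "'j \<Rightarrow> nat \<Rightarrow> 'a::field"
  assumes nonzero: "\<And>u. u \<in> vecs K \<Longrightarrow> u \<noteq> 0 \<Longrightarrow> codeword K J col u \<noteq> 0"
  shows "code_dim (gen_code K J col) = K"
proof -
  interpret V: vector_space "\<lambda>(c::'a) (f::'j \<Rightarrow> 'a). \<lambda>j. c * f j"
    by (rule vector_space_pointwise_scale)
  define b where "b i = codeword K J col (unit_vec i)" for i
  have injective: "u = u'"
    if "u \<in> vecs K" "u' \<in> vecs K" "codeword K J col u = codeword K J col u'" for u u'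
  proof (rule ccontr)
    assume "u \<noteq> u'"
    have "codeword K J col (\<lambda>l. u l - 1 * u' l) = 0"
      using that(3) codeword_diff_scaled[of K J col u 1 u'] by (simp add: fun_eq_iff)
    moreover have "(\<lambda>l. u l - 1 * u' l) \<in> vecs K" "(\<lambda>l. u l - 1 * u' l) \<noteq> 0"
      using that(1,2) \<open>u \<noteq> u'\<close> by (auto simp: vecs_def fun_eq_iff)
    ultimately show False
      using nonzero by blast
  qed
  have inj_b: "inj_on b {..<K}"
  proof (rule inj_onI)
    fix i i' assume "i \<in> {..<K}" "i' \<in> {..<K}" "b i = b i'"
    then have "unit_vec i = (unit_vec i' :: nat \<Rightarrow> 'a)"
      by (auto simp: b_def intro: injective unit_vec_in_vecs)
    from fun_cong[OF this, of i] show "i = i'"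
      by (simp add: unit_vec_def split: if_splits)
  qed
  have "V.dim (gen_code K J col) = K"
  proof (rule V.dim_unique[of "b ` {..<K}"])
    show "b ` {..<K} \<subseteq> gen_code K J col"
      by (auto simp: b_def codeword_in_gen_code)
    show "gen_code K J col \<subseteq> V.span (b ` {..<K})"
    proof
      fix c assume "c \<in> gen_code K J col"
      then obtain u where "c = codeword K J col u"
        by (auto simp: gen_code_eq_image)
      then have "c = (\<Sum>i<K. (\<lambda>j. u i * b i j))"
        by (simp add: b_def codeword_unit_vec_expansion[of K J col u])
      also have "\<dots> \<in> V.span (b ` {..<K})"
        by (intro V.span_sum V.span_scale[unfolded case_prod_beta] V.span_base) auto
      finally show "c \<in> V.span (b ` {..<K})" .
    qed
    show "V.independent (b ` {..<K})"
    proof (rule V.independent_if_scalars_zero)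
      fix f x assume sum_0: "(\<Sum>x\<in>b ` {..<K}. (\<lambda>j. f x * x j)) = 0" and "x \<in> b ` {..<K}"
      define u where "u i = (if i < K then f (b i) else 0)" for i
      have "codeword K J col u = (\<Sum>i<K. (\<lambda>j. f (b i) * b i j))"
        unfolding codeword_unit_vec_expansion[of K J col u] b_def[symmetric]
        by (rule sum.cong) (auto simp: u_def)
      also have "\<dots> = 0"
        using sum_0 by (simp add: sum.reindex[OF inj_b])
      finally have "u = 0"
        using nonzero[of u] by (auto simp: u_def vecs_def)
      have "f (b i) = 0" if "i < K" for i
        using fun_cong[OF \<open>u = 0\<close>, of i] that by (simp add: u_def)
      with \<open>x \<in> b ` {..<K}\<close> show "f x = 0"
        by blast
    qed simp
    show "card (b ` {..<K}) = K"
      by (simp add: card_image[OF inj_b])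
  qed
  then show ?thesis
    by (simp add: code_dim_def)
qed

lemma finite_weights: "finite S \<Longrightarrow> finite {wt c | c. c \<in> S \<and> c \<noteq> 0}"
  using finite_imageI[of "{c \<in> S. c \<noteq> 0}" wt] by (simp add: setcompr_eq_image)

lemma min_weight_le: "finite S \<Longrightarrow> c \<in> S \<Longrightarrow> c \<noteq> 0 \<Longrightarrow> min_weight S \<le> wt c"
  unfolding min_weight_def by (rule Min_le[OF finite_weights]) blast+

lemma wt_le_max_weight: "finite S \<Longrightarrow> c \<in> S \<Longrightarrow> c \<noteq> 0 \<Longrightarrow> wt c \<le> max_weight S"
  unfolding max_weight_def by (rule Max_ge[OF finite_weights]) blast+

lemma max_weight_attained:
  assumes "finite S" "c \<in> S" "c \<noteq> 0"
  obtains c' where "c' \<in> S" "c' \<noteq> 0" "wt c' = max_weight S"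
proof -
  have "{wt c | c. c \<in> S \<and> c \<noteq> 0} \<noteq> {}"
    using assms(2,3) by auto
  then have "max_weight S \<in> {wt c | c. c \<in> S \<and> c \<noteq> 0}"
    unfolding max_weight_def by (rule Max_in[OF finite_weights[OF assms(1)]])
  then obtain c' where "c' \<in> S" "c' \<noteq> 0" "max_weight S = wt c'"
    by auto
  with that show ?thesis
    by simp
qed

lemma min_weight_eqI:
  assumes "finite S" "c \<in> S" "c \<noteq> 0" "wt c = m" "\<And>c. c \<in> S \<Longrightarrow> c \<noteq> 0 \<Longrightarrow> m \<le> wt c"
  shows "min_weight S = m"
  unfolding min_weight_def
proof (rule Min_eqI[OF finite_weights[OF assms(1)]])
  show "m \<in> {wt c | c. c \<in> S \<and> c \<noteq> 0}"
    using assms(2-4) by blast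
qed (use assms(5) in blast)

lemma max_weight_eqI:
  assumes "finite S" "c \<in> S" "c \<noteq> 0" "wt c = M" "\<And>c. c \<in> S \<Longrightarrow> c \<noteq> 0 \<Longrightarrow> wt c \<le> M"
  shows "max_weight S = M"
  unfolding max_weight_def
proof (rule Max_eqI[OF finite_weights[OF assms(1)]])
  show "M \<in> {wt c | c. c \<in> S \<and> c \<noteq> 0}"
    using assms(2-4) by blast
qed (use assms(5) in blast)

lemma sum_wt_diff_scaled:
  fixes c c' :: "'j \<Rightarrow> 'a::{finite,field}"
  assumes fin: "finite (supp c)" and sub: "supp c' \<subseteq> supp c"
  shows "(\<Sum>a\<in>UNIV - {0}. wt (\<lambda>j. c j - a * c' j)) + wt c' = (CARD('a) - 1) * wt c"
proof -
  define agree where "agree a = {j \<in> supp c'. c j = a * c' j}" for a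
  have agree_sub: "agree a \<subseteq> supp c" for a
    using sub by (auto simp: agree_def)
  have "supp (\<lambda>j. c j - a * c' j) = supp c - agree a" for a
    using sub by (auto simp: supp_def agree_def)
  then have wt_diff: "wt (\<lambda>j. c j - a * c' j) + card (agree a) = wt c" for a
    using agree_sub[of a] fin by (simp add: wt_def card_Diff_subset finite_subset card_mono)
  \<comment> \<open>each position of supp c' agrees for exactly one scalar, namely c j / c' j\<close>
  have "j \<in> agree (c j / c' j)" "c j / c' j \<noteq> 0" if "j \<in> supp c'" for j
    using that sub by (auto simp: agree_def supp_def)
  then have "supp c' = (\<Union>a\<in>UNIV - {0}. agree a)"
    by (intro equalityI subsetI) (blast, auto simp: agree_def)
  then have "wt c' = card (\<Union>a\<in>UNIV - {0}. agree a)"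
    by (simp add: wt_def)
  also have "\<dots> = (\<Sum>a\<in>UNIV - {0}. card (agree a))"
    using finite_subset[OF agree_sub fin] by (intro card_UN_disjoint) (auto simp: agree_def supp_def)
  finally show ?thesis
    by (simp add: sum.distrib[symmetric] wt_diff card_Diff_subset)
qed

lemma mult_less_if_ratio_gt:
  fixes q m M :: nat
  assumes "2 \<le> q" "(real q - 1) / real q < real m / real M"
  shows "0 < m" "(q - 1) * M < q * m"
proof -
  have "0 < (real q - 1) / real q"
    using assms(1) by simp
  then have "0 < real m / real M"
    using assms(2) by linarith
  then have pos: "0 < m" "0 < M"
    by (auto simp: zero_less_divide_iff)
  then show "0 < m"
    by simp
  have "0 < real q"
    using assms(1) by simp
  with pos assms(2) have "(real q - 1) * M < real q * m"
    by (simp add: divide_simps mult.commute)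
  moreover have "real (q - 1) = real q - 1"
    using assms(1) by (simp add: of_nat_diff)
  ultimately have "real ((q - 1) * M) < real (q * m)"
    by simp
  then show "(q - 1) * M < q * m"
    by (simp only: of_nat_less_iff)
qed

text \<open>Ashikhmin--Barg: if c' were not a multiple of c, the q - 1 words c - a c' (a \<noteq> 0) would
  all be nonzero, while their weights add up to (q - 1) wt c - wt c'.\<close>
lemma minimal_code_if_weight_ratio:
  fixes S :: "('j \<Rightarrow> 'a::{finite,field}) set"
  assumes fin: "finite S"
    and closed: "\<And>c c' a. c \<in> S \<Longrightarrow> c' \<in> S \<Longrightarrow> (\<lambda>j. c j - a * c' j) \<in> S"
    and ratio: "(real CARD('a) - 1) / real CARD('a) < real (min_weight S) / real (max_weight S)"
  shows "minimal_code S"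
  unfolding minimal_code_def
proof (intro ballI impI)
  fix c c' assume c: "c \<in> S" "c' \<in> S" "c \<noteq> 0" "c' \<noteq> 0" and sub: "supp c' \<subseteq> supp c"
  let ?q = "CARD('a)" and ?m = "min_weight S" and ?M = "max_weight S"
  have weights: "?m \<le> wt x \<and> wt x \<le> ?M" if "x \<in> S" "x \<noteq> 0" for x
    using fin that by (simp add: min_weight_le wt_le_max_weight)
  have "0 < ?m" and AB: "(?q - 1) * ?M < ?q * ?m"
    using mult_less_if_ratio_gt[OF two_le_card_field ratio] by simp_all
  have "finite (supp c)"
    using weights[OF c(1,3)] \<open>0 < ?m\<close> by (auto simp: wt_def intro: card_ge_0_finite)
  show "\<exists>a. a \<noteq> 0 \<and> c' = (\<lambda>j. a * c j)"
  proof (rule ccontr)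
    assume not_multiple: "\<not> (\<exists>a. a \<noteq> 0 \<and> c' = (\<lambda>j. a * c j))"
    have "(\<lambda>j. c j - a * c' j) \<noteq> 0" if "a \<noteq> 0" for a
    proof
      assume "(\<lambda>j. c j - a * c' j) = 0"
      then have "c' = (\<lambda>j. inverse a * c j)"
        using that by (auto simp: fun_eq_iff field_simps)
      with not_multiple that show False
        by (metis inverse_nonzero_iff_nonzero)
    qed
    then have "(?q - 1) * ?m \<le> (\<Sum>a\<in>UNIV - {0}. wt (\<lambda>j. c j - a * c' j))"
      using sum_bounded_below[of "UNIV - {0::'a}" ?m "\<lambda>a. wt (\<lambda>j. c j - a * c' j)"]
        weights closed[OF c(1,2)]
      by (simp add: card_Diff_subset)
    moreover have "?m \<le> wt c'" "(?q - 1) * wt c \<le> (?q - 1) * ?M"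
      using weights[OF c(2,4)] weights[OF c(1,3)] by simp_all
    ultimately have "(?q - 1) * ?m + ?m \<le> (?q - 1) * ?M"
      using sum_wt_diff_scaled[OF \<open>finite (supp c)\<close> sub] by linarith
    moreover have "(?q - 1) * ?m + ?m = ?q * ?m"
      using two_le_card_field[where 'a = 'a] by (simp add: algebra_simps)
    ultimately show False
      using AB by linarith
  qed
qed

lemma weight_ratio_gt:
  fixes q N w :: nat
  assumes "0 < q" "w < N"
  shows "(real q - 1) / real q < real (q * N - w) / real (q * N)"
proof -
  have "N \<le> q * N"
    using assms by simp
  with assms have "w \<le> q * N"
    by linarith
  then have "real (q * N - w) = real q * real N - real w"
    by (simp add: of_nat_diff)
  moreover have "real q * real w < real q * real N"
    using assms by simp
  then have "(real q - 1) * (real q * real N) < real q * (real q * real N - real w)"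
    by (simp add: algebra_simps)
  ultimately have "(real q - 1) * real (q * N) < real q * real (q * N - w)"
    by (simp only: of_nat_mult)
  then show ?thesis
    using assms by (simp add: divide_simps mult.commute)
qed

lemma less_power_if_log_less:
  assumes "1 < b" "log (real b) (real x) < real m"
  shows "x < b ^ m"
proof (cases "x = 0")
  case False
  then have "real x < real b powr real m"
    using assms by (simp add: log_less_iff)
  also have "\<dots> = real (b ^ m)"
    using assms by (simp add: powr_realpow)
  finally show ?thesis
    by (simp only: of_nat_less_iff)
qed (use assms in simp)

lemma inj_on_if_projective:
  assumes "projective n g"
  shows "inj_on g {..<n}"
proof (rule inj_onI, rule ccontr)
  fix i j assume ij: "i \<in> {..<n}" "j \<in> {..<n}" "g i = g j" "i \<noteq> j"
  have "\<not> (\<exists>c. g i = (\<lambda>l. c * g j l))"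
    using assms ij(1,2,4) unfolding projective_def by simp
  moreover have "g i = (\<lambda>l. 1 * g j l)"
    using ij(3) by simp
  ultimately show False
    by blast
qed

locale simplex_complement =
  fixes g :: "nat \<Rightarrow> nat \<Rightarrow> 'a::{finite,field}" and n k h :: nat and P :: "(nat \<Rightarrow> 'a) set"
  assumes cols: "\<forall>i<n. g i \<in> vecs k"
    and inj_g: "inj_on g {..<n}"
    and k_pos: "0 < k"
    and h_pos: "0 < h"
    and P_reps: "proj_reps (k + h) P"
    and g_in_P: "\<forall>i<n. g i \<in> P"
begin

abbreviation K where "K \<equiv> k + h"
abbreviation G where "G \<equiv> g ` {..<n}"
abbreviation C where "C \<equiv> gen_code k {..<n} g"
abbreviation D where "D \<equiv> gen_code K (P - G) id"

lemma P_subset_vecs: "P \<subseteq> vecs K"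
  using P_reps by (simp add: proj_reps_def)

lemma finite_P: "finite P"
  using finite_subset[OF P_subset_vecs finite_vecs] .

lemma G_subset_P: "G \<subseteq> P"
  using g_in_P by auto

lemma card_P_minus_G: "card (P - G) = (CARD('a) ^ K - 1) div (CARD('a) - 1) - n"
proof -
  have "card (P - G) = card P - card G"
    using G_subset_P by (simp add: card_Diff_subset)
  then show ?thesis
    by (simp add: card_proj_reps[OF P_reps] card_image[OF inj_g])
qed

lemma wt_codeword_C: "wt (codeword k {..<n} g u) = card (G \<inter> {v. dotp K u v \<noteq> 0})"
proof -
  have "G \<inter> {v. dotp k u v \<noteq> 0} = G \<inter> {v. dotp K u v \<noteq> 0}"
    using cols by (auto simp: dotp_eq_if_in_vecs[of _ k K])
  then show ?thesis
    by (simp add: wt_codeword[OF inj_g])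
qed

lemma wt_codeword_C_le: "wt (codeword k {..<n} g u) \<le> CARD('a) ^ (k - 1)"
proof (cases "\<exists>i<k. u i \<noteq> 0")
  case True
  then obtain i where i: "i < k" "u i \<noteq> 0"
    by blast
  have "G \<inter> {v. dotp k u v \<noteq> 0} \<subseteq> P \<inter> {v \<in> vecs k. dotp k u v \<noteq> 0}"
    using cols g_in_P by auto
  moreover have "card (P \<inter> {v \<in> vecs k. dotp k u v \<noteq> 0}) = CARD('a) ^ (k - 1)"
    using card_proj_reps_dotp_neq_0[OF P_reps, of k i u] i by simp
  ultimately have "card (G \<inter> {v. dotp k u v \<noteq> 0}) \<le> CARD('a) ^ (k - 1)"
    using card_mono[of "P \<inter> {v \<in> vecs k. dotp k u v \<noteq> 0}"] finite_P by fastforce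
  then show ?thesis
    by (simp add: wt_codeword[OF inj_g])
next
  case False
  then have "codeword k {..<n} g u = 0"
    by (simp add: codeword_def dotp_eq_0_if_vanishing fun_eq_iff)
  then show ?thesis
    by (simp add: wt_def supp_def)
qed

lemma wt_codeword_D:
  assumes u: "u \<in> vecs K" "u \<noteq> 0"
  shows "wt (codeword K (P - G) id u) = CARD('a) ^ (K - 1) - wt (codeword k {..<n} g u)"
proof -
  let ?H = "{v. dotp K u v \<noteq> 0}"
  obtain i where "u i \<noteq> 0"
    using u by (auto simp: fun_eq_iff)
  moreover have "i < K"
    using u \<open>u i \<noteq> 0\<close> by (auto simp: vecs_def not_less[symmetric])
  moreover have "P \<inter> ?H = P \<inter> {v \<in> vecs K. dotp K u v \<noteq> 0}"
    using P_subset_vecs by auto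
  ultimately have card_P_H: "card (P \<inter> ?H) = CARD('a) ^ (K - 1)"
    using card_proj_reps_dotp_neq_0[OF P_reps order_refl, of i u] by simp
  have "wt (codeword K (P - G) id u) = card ((P \<inter> ?H) - (G \<inter> ?H))"
    by (simp add: wt_codeword Int_Diff Diff_Int_distrib2)
  also have "\<dots> = card (P \<inter> ?H) - card (G \<inter> ?H)"
    by (rule card_Diff_subset) (use G_subset_P in auto)
  finally show ?thesis
    by (simp add: card_P_H wt_codeword_C)
qed

lemma codeword_D_nonzero:
  assumes "u \<in> vecs K" "u \<noteq> 0"
  shows "codeword K (P - G) id u \<noteq> 0"
proof -
  have "CARD('a) ^ (k - 1) < CARD('a) ^ (K - 1)"
    using two_le_card_field[where 'a = 'a] k_pos h_pos by (simp add: power_strict_increasing)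
  then have "0 < wt (codeword K (P - G) id u)"
    using wt_codeword_D[OF assms] wt_codeword_C_le[of u] by simp
  then show ?thesis
    by (auto simp: wt_def supp_def)
qed

lemma code_dim_D: "code_dim D = K"
  by (rule code_dim_gen_code) (rule codeword_D_nonzero)

lemma wt_D_bounds:
  assumes "c \<in> D" "c \<noteq> 0"
  shows "CARD('a) ^ (K - 1) - max_weight C \<le> wt c \<and> wt c \<le> CARD('a) ^ (K - 1)"
proof -
  obtain u where u: "u \<in> vecs K" "c = codeword K (P - G) id u"
    using assms(1) by (auto simp: gen_code_eq_image)
  with assms(2) have "u \<noteq> 0"
    by auto
  have "wt (codeword k {..<n} g u) \<le> max_weight C"
  proof (cases "codeword k {..<n} g u = 0")
    case False
    then show ?thesis
      by (intro wt_le_max_weight finite_gen_code codeword_in_gen_code)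
  qed (simp add: wt_def supp_def)
  then show ?thesis
    using wt_codeword_D[OF u(1) \<open>u \<noteq> 0\<close>] u(2) by simp
qed

lemma min_weight_D:
  assumes "c \<in> C" "c \<noteq> 0"
  shows "min_weight D = CARD('a) ^ (K - 1) - max_weight C"
proof -
  obtain c0 where c0: "c0 \<in> C" "c0 \<noteq> 0" "wt c0 = max_weight C"
    using max_weight_attained[OF finite_gen_code assms] .
  then obtain u where u: "u \<in> vecs k" "c0 = codeword k {..<n} g u"
    by (auto simp: gen_code_eq_image)
  have "u \<in> vecs K"
    using u(1) vecs_mono[of k K] by auto
  moreover have "u \<noteq> 0"
    using c0(2) u(2) by auto
  ultimately show ?thesis
  proof (rule min_weight_eqI[OF finite_gen_code codeword_in_gen_code codeword_D_nonzero])
    show "wt (codeword K (P - G) id u) = CARD('a) ^ (K - 1) - max_weight C"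
      using wt_codeword_D[OF \<open>u \<in> vecs K\<close> \<open>u \<noteq> 0\<close>] c0(3) u(2) by simp
  qed (use wt_D_bounds in blast)
qed

lemma max_weight_D: "max_weight D = CARD('a) ^ (K - 1)"
proof -
  have "unit_vec k \<in> vecs K"
    using h_pos by (simp add: unit_vec_in_vecs)
  have "codeword k {..<n} g (unit_vec k) = 0"
    by (simp add: codeword_def dotp_unit_vec_left fun_eq_iff)
  from \<open>unit_vec k \<in> vecs K\<close> unit_vec_neq_zero show ?thesis
  proof (rule max_weight_eqI[OF finite_gen_code codeword_in_gen_code codeword_D_nonzero])
    show "wt (codeword K (P - G) id (unit_vec k)) = CARD('a) ^ (K - 1)"
      using wt_codeword_D[OF \<open>unit_vec k \<in> vecs K\<close> unit_vec_neq_zero]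
        \<open>codeword k {..<n} g (unit_vec k) = 0\<close> by (simp add: wt_def supp_def)
  qed (use wt_D_bounds unit_vec_neq_zero in blast)+
qed

lemma weight_ratio_D:
  assumes "c \<in> C" "c \<noteq> 0" "max_weight C < CARD('a) ^ (K - 2)"
  shows "(real CARD('a) - 1) / real CARD('a) < real (min_weight D) / real (max_weight D)"
proof -
  have "K - 1 = Suc (K - 2)"
    using k_pos h_pos by simp
  then have "CARD('a) ^ (K - 1) = CARD('a) * CARD('a) ^ (K - 2)"
    by simp
  then show ?thesis
    using min_weight_D[OF assms(1,2)] max_weight_D weight_ratio_gt[OF _ assms(3)] by simp
qed

lemma minimal_code_D:
  assumes "c \<in> C" "c \<noteq> 0" "max_weight C < CARD('a) ^ (K - 2)"
  shows "minimal_code D"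
proof (rule minimal_code_if_weight_ratio)
  show "finite D"
    by (rule finite_gen_code)
  show "(\<lambda>j. c j - a * c' j) \<in> D" if "c \<in> D" "c' \<in> D" for c c' a
    using that by (rule gen_code_diff_scaled)
qed (rule weight_ratio_D[OF assms])

end

theorem theorem3p1:
  fixes g :: "nat \<Rightarrow> (nat \<Rightarrow> 'a::{finite,field})"
    and n k h w :: nat
    and P :: "(nat \<Rightarrow> 'a) set"
  assumes k_pos: "0 < k"
    and cols: "\<forall>i<n. g i \<in> vecs k"
    and proj: "projective n g"
    and dimC: "code_dim (gen_code k {..<n} g) = k"
    and w_def: "w = max_weight (gen_code k {..<n} g)"
    and h_pos: "0 < h"
    and P_reps: "proj_reps (k + h) P"
    and g_in_P: "\<forall>i<n. g i \<in> P"
  shows "card (P - g ` {..<n}) = (CARD('a) ^ (k + h) - 1) div (CARD('a) - 1) - n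
       \<and> code_dim (gen_code (k + h) (P - g ` {..<n}) id) = k + h
       \<and> min_weight (gen_code (k + h) (P - g ` {..<n}) id) = CARD('a) ^ (k + h - 1) - w
       \<and> max_weight (gen_code (k + h) (P - g ` {..<n}) id) = CARD('a) ^ (k + h - 1)
       \<and> (real h > log (real CARD('a)) (real w) - real k + 2 \<longrightarrow>
            minimal_code (gen_code (k + h) (P - g ` {..<n}) id)
            \<and> real (min_weight (gen_code (k + h) (P - g ` {..<n}) id))
                / real (max_weight (gen_code (k + h) (P - g ` {..<n}) id))
              > (real CARD('a) - 1) / real CARD('a))"
proof -
  interpret simplex_complement g n k h P
    using cols inj_on_if_projective[OF proj] k_pos h_pos P_reps g_in_P by unfold_locales
  have "\<not> C \<subseteq> {0}"
  proof
    assume "C \<subseteq> {0}"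
    then have "code_dim C = 0"
      by (rule code_dim_trivial)
    with dimC k_pos show False
      by simp
  qed
  then obtain c where c: "c \<in> C" "c \<noteq> 0"
    by blast
  have w_small: "w < CARD('a) ^ (K - 2)" if "real h > log (real CARD('a)) (real w) - real k + 2"
  proof (rule less_power_if_log_less)
    show "1 < CARD('a)"
      using two_le_card_field[where 'a = 'a] by simp
    show "log (real CARD('a)) (real w) < real (K - 2)"
      using that k_pos h_pos by (simp add: of_nat_diff)
  qed
  show ?thesis
    unfolding w_def
    using card_P_minus_G code_dim_D min_weight_D[OF c] max_weight_D
      weight_ratio_D[OF c] minimal_code_D[OF c] w_small[unfolded w_def]
    by simp
qed

end
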